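(* Let $k\ge 1$ be the cache size. In both the discard-predictions setup and the phase-predictions setup, there is no deterministic online paging algorithm that is $(\alpha,\beta,\gamma)$-competitive with either $\alpha+\beta<k$ or $\alpha+(k-1)\gamma<k$.
   Context: Paging: there is a universe $U$ of pages and a cache holding at most $k$ pages, initially empty. Requests $r_1,\dots,r_n\in U$ arrive online. If the requested page is not in the cache (a page fault), it must be loaded, evicting a cached page if the cache holds $k$ pages. The cost is the number of page faults; $\mathrm{OPT}(I)$ is the minimum offline cost on request sequence $I$. Along with each request $r_i$ the online algorithm receives a prediction bit $p_i\in\{0,1\}$ (which may be arbitrary). An algorithm is $(\alpha,\beta,\gamma)$-competitive (with $\alpha,\beta,\gamma\ge0$) if there is a constant $b$ (possibly depending on $k$) such that for every instance $I$ and all predictions $p$, $\mathrm{ALG}(I,p)\le \alpha\,\mathrm{OPT}(I)+\beta\,\eta_0+\gamma\,\eta_1+b$. Discard-predictions setup: fix the optimal offline algorithm LFD (on a fault with full cache, evict a cached page never requested again if one exists, otherwise the cached page whose next request is furthest in the future; ties broken by a fixed rule). Ground truth: $p_i^*=0$ if LFD keeps $r_i$ in cache until its next request (or to the end if none), $p_i^*=1$ if LFD evicts $r_i$ before it is requested again. Errors: $\eta_h=|\{i\in[n]: p_i=h,\ p_i^*=1-h\}|$. Phase-predictions setup: partition the requests into $k$-phases (the first starts at $r_1$; each phase is a maximal contiguous segment with at most $k$ distinct pages; the next starts right after). For $r_i$ in phase $j$: $p_i^*=0$ if page $r_i$ is requested in phase $j+1$, else $p_i^*=1$. Errors: $\eta_h$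 = number of counted requests $i$ with $p_i=h$, $p_i^*=1-h$, where counted requests are, for each non-last phase $j$ and each page requested in phase $j$, only the last request to that page within phase $j$. *)

theory Defs
  imports Main "HOL.Real"
begin

(* A prediction bit is a bool: True = 1, False = 0.
   A (deterministic) eviction chooser receives the history of all
   (request, prediction) pairs seen so far (including the current one)
   and the current cache, and names the page to evict. *)
type_synonym chooser = "(nat \<times> bool) list \<Rightarrow> nat set \<Rightarrow> nat"

definition evict_page :: "chooser \<Rightarrow> (nat \<times> bool) list \<Rightarrow> nat set \<Rightarrow> nat" where
  "evict_page A h C = (let y = A h C in if y \<in> C then y else Min C)"

(* serve request r (history h already includes the current pair) *)
definition step :: "nat \<Rightarrow> chooser \<Rightarrow> (nat \<times> bool) list \<Rightarrow> nat set \<Rightarrow> nat \<Rightarrow> nat set" where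
  "step k A h C r =
     (if r \<in> C then C
      else if card C < k then insert r C
      else insert r (C - {evict_page A h C}))"

fun trace :: "nat \<Rightarrow> chooser \<Rightarrow> (nat \<times> bool) list \<Rightarrow> nat set \<Rightarrow> (nat \<times> bool) list \<Rightarrow> nat set list" where
  "trace k A h C [] = []"
| "trace k A h C (x # xs) =
     (let C' = step k A (h @ [x]) C (fst x) in C' # trace k A (h @ [x]) C' xs)"

fun cost :: "nat \<Rightarrow> chooser \<Rightarrow> (nat \<times> bool) list \<Rightarrow> nat set \<Rightarrow> (nat \<times> bool) list \<Rightarrow> nat" where
  "cost k A h C [] = 0"
| "cost k A h C (x # xs) =
     (if fst x \<in> C then 0 else 1) + cost k A (h @ [x]) (step k A (h @ [x]) C (fst x)) xs"

definition inp :: "nat list \<Rightarrow> (nat \<Rightarrow> bool) \<Rightarrow> (nat \<times> bool) list" where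
  "inp I p = map (\<lambda>i. (I ! i, p i)) [0..<length I]"

definition ALG :: "nat \<Rightarrow> chooser \<Rightarrow> nat list \<Rightarrow> (nat \<Rightarrow> bool) \<Rightarrow> nat" where
  "ALG k A I p = cost k A [] {} (inp I p)"

(* Offline optimum: I is fixed, so any function of the history (whose length
   is the current index) is an arbitrary offline demand-paging strategy. *)
definition OPT :: "nat \<Rightarrow> nat list \<Rightarrow> nat" where
  "OPT k I = (LEAST c. \<exists>A. c = cost k A [] {} (inp I (\<lambda>_. False)))"

definition next_req :: "nat list \<Rightarrow> nat \<Rightarrow> nat \<Rightarrow> nat" where
  "next_req I i x = (LEAST j. i < j \<and> j < length I \<and> I ! j = x)"

definition lfd_choose :: "(nat \<Rightarrow> nat set \<Rightarrow> nat) \<Rightarrow> nat list \<Rightarrow> chooser" where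
  "lfd_choose tb I h C =
     (let i = length h - 1;
          later = {x \<in> C. \<forall>j. i < j \<and> j < length I \<longrightarrow> I ! j \<noteq> x}
      in if later \<noteq> {} then tb i later
         else arg_max (next_req I i) (\<lambda>x. x \<in> C))"

definition lfd_trace :: "nat \<Rightarrow> (nat \<Rightarrow> nat set \<Rightarrow> nat) \<Rightarrow> nat list \<Rightarrow> nat set list" where
  "lfd_trace k tb I = trace k (lfd_choose tb I) [] {} (inp I (\<lambda>_. False))"

(* True = 1: LFD evicts r_i before r_i is requested again (or before the end) *)
definition pstar_disc :: "nat \<Rightarrow> (nat \<Rightarrow> nat set \<Rightarrow> nat) \<Rightarrow> nat list \<Rightarrow> nat \<Rightarrow> bool" where
  "pstar_disc k tb I i =
     (\<exists>j. i \<le> j \<and> j < length I \<and> (\<forall>l. i < l \<and> l \<le> j \<longrightarrow> I ! l \<noteq> I ! i)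
          \<and> I ! i \<notin> lfd_trace k tb I ! j)"

definition eta_disc :: "nat \<Rightarrow> (nat \<Rightarrow> nat set \<Rightarrow> nat) \<Rightarrow> bool \<Rightarrow> nat list \<Rightarrow> (nat \<Rightarrow> bool) \<Rightarrow> nat" where
  "eta_disc k tb h I p = card {i. i < length I \<and> p i = h \<and> pstar_disc k tb I i = (\<not> h)}"

fun phase_ids :: "nat \<Rightarrow> nat \<Rightarrow> nat set \<Rightarrow> nat list \<Rightarrow> nat list" where
  "phase_ids k j S [] = []"
| "phase_ids k j S (r # rs) =
     (if card (insert r S) \<le> k then j # phase_ids k j (insert r S) rs
      else (j + 1) # phase_ids k (j + 1) {r} rs)"

definition phase :: "nat \<Rightarrow> nat list \<Rightarrow> nat \<Rightarrow> nat" where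
  "phase k I i = phase_ids k 0 {} I ! i"

definition pstar_phase :: "nat \<Rightarrow> nat list \<Rightarrow> nat \<Rightarrow> bool" where
  "pstar_phase k I i = (\<not> (\<exists>l < length I. phase k I l = phase k I i + 1 \<and> I ! l = I ! i))"

definition counted :: "nat \<Rightarrow> nat list \<Rightarrow> nat \<Rightarrow> bool" where
  "counted k I i =
     (i < length I \<and> phase k I i \<noteq> phase k I (length I - 1)
      \<and> (\<forall>l. i < l \<and> l < length I \<and> phase k I l = phase k I i \<longrightarrow> I ! l \<noteq> I ! i))"

definition eta_phase :: "nat \<Rightarrow> bool \<Rightarrow> nat list \<Rightarrow> (nat \<Rightarrow> bool) \<Rightarrow> nat" where
  "eta_phase k h I p = card {i. counted k I i \<and> p i = h \<and> pstar_phase k I i = (\<not> h)}"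

(* eta False = eta_0, eta True = eta_1 *)
definition competitive ::
  "nat \<Rightarrow> chooser \<Rightarrow> (bool \<Rightarrow> nat list \<Rightarrow> (nat \<Rightarrow> bool) \<Rightarrow> nat) \<Rightarrow> real \<Rightarrow> real \<Rightarrow> real \<Rightarrow> bool" where
  "competitive k A eta \<alpha> \<beta> \<gamma> =
     (\<exists>b::real. \<forall>I p. real (ALG k A I p)
        \<le> \<alpha> * real (OPT k I) + \<beta> * real (eta False I p) + \<gamma> * real (eta True I p) + b)"

definition valid_tiebreak :: "(nat \<Rightarrow> nat set \<Rightarrow> nat) \<Rightarrow> bool" where
  "valid_tiebreak tb = (\<forall>i S. finite S \<and> S \<noteq> {} \<longrightarrow> tb i S \<in> S)"

end

theory Submission
  imports Defs
begin

(* On distinct pages with ground-truth predictions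
   ALG = OPT = n and both errors vanish, which forces alpha >= 1.  Otherwise the adversary
   always requests a page of {0..k} missing from A's cache, so A faults on all n requests.
   On such a sequence LFD faults with a non-full cache at most k times; after an eviction
   its cache misses only the victim, so the next fault requests the victim, and since LFD
   evicted the page requested furthest in the future, the other k - 1 cached pages are
   requested before.  Hence evictions are at least k requests apart and OPT <= n/k + O(k).
   Discard ground truth 1 marks exactly the last request before each eviction, so all-0
   predictions give eta_0 <= n/k + 1 and eta_1 = 0, and all-1 predictions give eta_0 = 0
   and eta_1 <= n - OPT + k.  Every phase but the last holds k of the k + 1 pages, so there
   are at most n/k phases; per phase at most k - 1 counted requests have phase ground
   truth 0 (the first page of the next phase is new) and, except in the second-to-last
   phase, at most one has ground truth 1 (it requests the single page missing from the
   next phase).  In each case the competitive inequality becomes n <= theta n + O(1) with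
   theta = (alpha + beta)/k or (alpha + (k - 1) gamma)/k, which forces theta >= 1; for
   the discard gamma-bound this uses gamma <= alpha, a consequence of alpha >= 1. *)

section \<open>Runs of a paging algorithm\<close>

lemma step_subset: "step k B h C r \<subseteq> insert r C"
  by (auto simp: step_def)

lemma in_step: "r \<in> step k B h C r"
  by (simp add: step_def)

lemma finite_step: "finite C \<Longrightarrow> finite (step k B h C r)"
  using step_subset finite_subset by (metis finite_insert)

lemma evict_page_in: "finite C \<Longrightarrow> C \<noteq> {} \<Longrightarrow> evict_page B h C \<in> C"
  by (simp add: evict_page_def Let_def)

lemma card_step:
  assumes "k \<ge> 1" "finite C" "card C \<le> k"
  shows "card C \<le> card (step k B h C r) \<and> card (step k B h C r) \<le> k"
proof (cases "r \<notin> C \<and> card C = k")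
  case True
  then have "C \<noteq> {}"
    using assms(1) by auto
  then have "evict_page B h C \<in> C"
    using evict_page_in[OF assms(2)] by blast
  then show ?thesis
    using True assms by (simp add: step_def card_insert_if)
next
  case False
  then show ?thesis
    using assms by (auto simp: step_def card_insert_if)
qed

(* the cache in which request j of xs is served, starting from cache C after history h *)
fun cache_state ::
  "nat \<Rightarrow> chooser \<Rightarrow> (nat \<times> bool) list \<Rightarrow> nat set \<Rightarrow> (nat \<times> bool) list \<Rightarrow> nat \<Rightarrow> nat set" where
  "cache_state k B h C xs 0 = C"
| "cache_state k B h C xs (Suc j) =
     step k B (h @ take (Suc j) xs) (cache_state k B h C xs j) (fst (xs ! j))"

abbreviation cache :: "nat \<Rightarrow> chooser \<Rightarrow> (nat \<times> bool) list \<Rightarrow> nat \<Rightarrow> nat set" where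
  "cache k B xs \<equiv> cache_state k B [] {} xs"

lemma cache_state_Cons:
  "cache_state k B h C (x # xs) (Suc j) = cache_state k B (h @ [x]) (step k B (h @ [x]) C (fst x)) xs j"
  by (induction j) auto

lemma trace_nth_cache_state:
  "j < length xs \<Longrightarrow> trace k B h C xs ! j = cache_state k B h C xs (Suc j)"
proof (induction xs arbitrary: h C j)
  case Nil
  then show ?case by simp
next
  case (Cons x xs)
  then show ?case
    by (cases j) (simp_all add: Let_def cache_state_Cons del: cache_state.simps(2))
qed

lemma cost_eq_sum_faults:
  "cost k B h C xs = (\<Sum>j<length xs. if fst (xs ! j) \<in> cache_state k B h C xs j then 0 else 1)"
proof (induction xs arbitrary: h C)
  case Nil
  then show ?case by simp
next
  case (Cons x xs)
  show ?case
    by (simp only: cost.simps Cons.IH length_Cons sum.lessThan_Suc_shift cache_state_Cons nth_Cons_Suc)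
      simp
qed

lemma cost_eq_card_faults:
  "cost k B h C xs = card {j. j < length xs \<and> fst (xs ! j) \<notin> cache_state k B h C xs j}"
proof -
  have "card {j \<in> {..<length xs}. fst (xs ! j) \<notin> cache_state k B h C xs j}
      = (\<Sum>j<length xs. if fst (xs ! j) \<in> cache_state k B h C xs j then 0 else 1)"
    unfolding card_eq_sum sum.inter_filter[OF finite_lessThan] by (intro sum.cong) auto
  then show ?thesis
    by (simp add: cost_eq_sum_faults)
qed

lemma cache_finite_card:
  assumes "k \<ge> 1"
  shows "finite (cache k B xs j) \<and> card (cache k B xs j) \<le> k"
  by (induction j) (simp_all add: finite_step card_step[OF assms])

lemma cache_subset_requests: "cache k B xs j \<subseteq> {fst (xs ! m) | m. m < j}"
proof (induction j)
  case 0
  then show ?case by simp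
next
  case (Suc j)
  then show ?case
    using step_subset[of k B "take (Suc j) xs" "cache k B xs j" "fst (xs ! j)"]
    by (fastforce simp: less_Suc_eq)
qed

lemma cache_Suc_subset:
  "cache_state k B h C xs (Suc j) \<subseteq> insert (fst (xs ! j)) (cache_state k B h C xs j)"
  by (simp add: step_subset)

lemma request_in_cache_Suc: "fst (xs ! j) \<in> cache_state k B h C xs (Suc j)"
  by (simp add: in_step)

lemma cache_hit:
  "fst (xs ! j) \<in> cache_state k B h C xs j \<Longrightarrow>
   cache_state k B h C xs (Suc j) = cache_state k B h C xs j"
  by (simp add: step_def)

lemma cache_fault_not_full:
  "fst (xs ! j) \<notin> cache_state k B h C xs j \<Longrightarrow> card (cache_state k B h C xs j) < k \<Longrightarrow>
   cache_state k B h C xs (Suc j) = insert (fst (xs ! j)) (cache_state k B h C xs j)"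
  by (simp add: step_def)

lemma cache_fault_full:
  assumes "k \<ge> 1" "fst (xs ! j) \<notin> cache k B xs j" "card (cache k B xs j) = k"
  defines "e \<equiv> evict_page B (take (Suc j) xs) (cache k B xs j)"
  shows "e \<in> cache k B xs j \<and> cache k B xs (Suc j) = insert (fst (xs ! j)) (cache k B xs j - {e})"
proof -
  have "e \<in> cache k B xs j"
    unfolding e_def using assms cache_finite_card[OF assms(1)] by (intro evict_page_in) auto
  then show ?thesis
    using assms by (simp add: step_def)
qed

lemma card_cache_mono:
  assumes "k \<ge> 1" "a \<le> b"
  shows "card (cache k B xs a) \<le> card (cache k B xs b)"
proof (rule lift_Suc_mono_le[OF _ assms(2)])
  fix j
  show "card (cache k B xs j) \<le> card (cache k B xs (Suc j))"
    using card_step[OF assms(1)] cache_finite_card[OF assms(1), of B xs j] by simp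
qed

lemma enters_cache_only_when_requested:
  assumes "x \<notin> cache_state k B h C xs a" "a \<le> b" "x \<in> cache_state k B h C xs b"
  shows "\<exists>m. a \<le> m \<and> m < b \<and> fst (xs ! m) = x"
  using assms(2,3)
proof (induction b rule: dec_induct)
  case base
  then show ?case using assms(1) by simp
next
  case (step m)
  show ?case
  proof (cases "x \<in> cache_state k B h C xs m")
    case True
    then show ?thesis using step.IH less_SucI by blast
  next
    case False
    then have "x = fst (xs ! m)"
      using step.prems cache_Suc_subset by blast
    then show ?thesis using step.hyps by blast
  qed
qed

lemma cache_state_append:
  "j \<le> length xs \<Longrightarrow> cache_state k B h C (xs @ ys) j = cache_state k B h C xs j"
proof (induction j)
  case 0
  then show ?case by simp
next
  case (Suc j)
  then have "take (Suc j) (xs @ ys) = take (Suc j) xs" "(xs @ ys) ! j = xs ! j"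
    by (auto simp: nth_append)
  then show ?case using Suc by (simp del: take_Suc)
qed

lemma inp_const: "inp I (\<lambda>_. c) = map (\<lambda>r. (r, c)) I"
proof -
  have "inp I (\<lambda>_. c) = map (\<lambda>r. (r, c)) (map (\<lambda>i. I ! i) [0..<length I])"
    unfolding inp_def by simp
  then show ?thesis by (simp only: map_nth)
qed

lemma inp_nth: "i < length I \<Longrightarrow> inp I p ! i = (I ! i, p i)"
  by (simp add: inp_def)

lemma length_inp [simp]: "length (inp I p) = length I"
  by (simp add: inp_def)

lemma cost_distinct:
  assumes "distinct I"
  shows "cost k B [] {} (inp I p) = length I"
proof -
  have "I ! j \<notin> cache k B (inp I p) j" if "j < length I" for j
  proof
    assume "I ! j \<in> cache k B (inp I p) j"
    then obtain m where m: "m < j" "I ! j = fst (inp I p ! m)"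
      using cache_subset_requests by blast
    then have "I ! j = I ! m"
      using that by (simp add: inp_nth)
    with m(1) that show False
      using nth_eq_iff_index_eq[OF assms, of j m] by simp
  qed
  then have "{j. j < length I \<and> fst (inp I p ! j) \<notin> cache k B (inp I p) j} = {..<length I}"
    by (auto simp: inp_nth)
  then show ?thesis
    unfolding cost_eq_card_faults by simp
qed

lemma ALG_distinct: "distinct I \<Longrightarrow> ALG k A I p = length I"
  unfolding ALG_def by (rule cost_distinct)

lemma OPT_distinct: "distinct I \<Longrightarrow> OPT k I = length I"
  unfolding OPT_def by (auto simp: cost_distinct intro!: Least_equality)

lemma OPT_le_cost: "OPT k I \<le> cost k B [] {} (inp I (\<lambda>_. False))"
  unfolding OPT_def by (rule Least_le) blast

section \<open>The cruel adversary\<close>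

fun cruel_seq :: "nat \<Rightarrow> chooser \<Rightarrow> bool \<Rightarrow> nat \<Rightarrow> nat list" where
  "cruel_seq k A c 0 = []"
| "cruel_seq k A c (Suc n) =
     cruel_seq k A c n @ [Min ({0..k} - cache k A (map (\<lambda>r. (r, c)) (cruel_seq k A c n)) n)]"

lemma length_cruel_seq [simp]: "length (cruel_seq k A c n) = n"
  by (induction n) auto

lemma cruel_seq_nth:
  "j < n \<Longrightarrow> cruel_seq k A c n ! j = Min ({0..k} - cache k A (map (\<lambda>r. (r, c)) (cruel_seq k A c n)) j)"
proof (induction n)
  case 0
  then show ?case by simp
next
  case (Suc n)
  have "cache k A (map (\<lambda>r. (r, c)) (cruel_seq k A c (Suc n))) j
      = cache k A (map (\<lambda>r. (r, c)) (cruel_seq k A c n)) j"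
    using Suc.prems cache_state_append[of j "map (\<lambda>r. (r, c)) (cruel_seq k A c n)"] by simp
  then show ?case
    using Suc by (cases "j < n") (simp_all add: nth_append less_Suc_eq)
qed

lemma page_missing_from_cache:
  assumes "k \<ge> 1"
  shows "{0..k} - cache k B xs j \<noteq> {}"
proof
  assume "{0..k} - cache k B xs j = {}"
  then have "card {0..k} \<le> card (cache k B xs j)"
    using cache_finite_card[OF assms] by (intro card_mono) auto
  then show False
    using cache_finite_card[OF assms, of B xs j] by simp
qed

lemma cruel_seq_nth_missing:
  assumes "k \<ge> 1" "j < n"
  shows "cruel_seq k A c n ! j \<in> {0..k} - cache k A (map (\<lambda>r. (r, c)) (cruel_seq k A c n)) j"
  unfolding cruel_seq_nth[OF assms(2)]
  using page_missing_from_cache[OF assms(1)] by (intro Min_in) auto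

lemma ALG_cruel_seq: "k \<ge> 1 \<Longrightarrow> ALG k A (cruel_seq k A c n) (\<lambda>_. c) = n"
proof -
  assume "k \<ge> 1"
  then have "{j. j < n \<and> fst (map (\<lambda>r. (r, c)) (cruel_seq k A c n) ! j)
        \<notin> cache k A (map (\<lambda>r. (r, c)) (cruel_seq k A c n)) j} = {..<n}"
    using cruel_seq_nth_missing by auto
  then show ?thesis
    unfolding ALG_def inp_const cost_eq_card_faults by simp
qed

section \<open>Belady's rule LFD on \<open>k + 1\<close> pages\<close>

lemma card_sparse_set:
  fixes S :: "nat set"
  assumes "S \<subseteq> {..<n}" and sparse: "\<And>a b. a \<in> S \<Longrightarrow> b \<in> S \<Longrightarrow> a < b \<Longrightarrow> a + k \<le> b"
  shows "k * card S \<le> n + k - 1"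
proof -
  have "finite S"
    using assms(1) finite_subset by blast
  moreover have "\<forall>a\<in>S. \<forall>b\<in>S. a \<noteq> b \<longrightarrow> {a..<a + k} \<inter> {b..<b + k} = {}"
    using sparse by (fastforce simp: linorder_neq_iff)
  ultimately have "k * card S = card (\<Union>a\<in>S. {a..<a + k})"
    by (simp add: card_UN_disjoint)
  also have "\<dots> \<le> card {..<n + k - 1}"
  proof (intro card_mono UN_least subsetI)
    fix a x
    assume "a \<in> S" "x \<in> {a..<a + k}"
    moreover from \<open>a \<in> S\<close> have "a < n"
      using assms(1) by auto
    ultimately show "x \<in> {..<n + k - 1}"
      by auto
  qed simp
  finally show ?thesis by simp
qed

definition requested_after :: "nat list \<Rightarrow> nat \<Rightarrow> nat \<Rightarrow> bool" where
  "requested_after I i x \<longleftrightarrow> (\<exists>j. i < j \<and> j < length I \<and> I ! j = x)"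

lemma next_req:
  assumes "requested_after I i x"
  shows "i < next_req I i x \<and> next_req I i x < length I \<and> I ! next_req I i x = x"
  using assms unfolding requested_after_def next_req_def by (rule LeastI_ex)

lemma next_req_le: "i < j \<Longrightarrow> j < length I \<Longrightarrow> I ! j = x \<Longrightarrow> next_req I i x \<le> j"
  unfolding next_req_def by (rule Least_le) simp

lemma lfd_choose_eq:
  assumes "length h = Suc i"
  shows "lfd_choose tb I h C =
    (if {x \<in> C. \<not> requested_after I i x} \<noteq> {} then tb i {x \<in> C. \<not> requested_after I i x}
     else arg_max (next_req I i) (\<lambda>x. x \<in> C))"
proof -
  have unrequested: "{x \<in> C. \<forall>j. i < j \<and> j < length I \<longrightarrow> I ! j \<noteq> x}
      = {x \<in> C. \<not> requested_after I i x}"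
    by (auto simp: requested_after_def)
  show ?thesis
    unfolding lfd_choose_def Let_def assms diff_Suc_1 by (simp only: unrequested)
qed

lemma lfd_choose_unrequested:
  assumes "valid_tiebreak tb" "finite C" "length h = Suc i" "x \<in> C" "\<not> requested_after I i x"
  shows "lfd_choose tb I h C \<in> C \<and> \<not> requested_after I i (lfd_choose tb I h C)"
proof -
  let ?U = "{x \<in> C. \<not> requested_after I i x}"
  have "?U \<noteq> {}" "finite ?U"
    using assms(2,4,5) by auto
  then have "tb i ?U \<in> ?U"
    using assms(1) unfolding valid_tiebreak_def by blast
  moreover have "lfd_choose tb I h C = tb i ?U"
    using lfd_choose_eq[OF assms(3)] \<open>?U \<noteq> {}\<close> by presburger
  ultimately show ?thesis
    by simp
qed

lemma lfd_choose_furthest: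
  assumes "length h = Suc i" "x \<in> C" "\<forall>y\<in>C. requested_after I i y"
  shows "lfd_choose tb I h C \<in> C \<and> (\<forall>y\<in>C. next_req I i y \<le> next_req I i (lfd_choose tb I h C))"
proof -
  have "{x \<in> C. \<not> requested_after I i x} = {}"
    using assms(3) by blast
  then have "lfd_choose tb I h C = arg_max (next_req I i) (\<lambda>x. x \<in> C)"
    using lfd_choose_eq[OF assms(1)] by presburger
  moreover have "\<forall>y. y \<in> C \<longrightarrow> next_req I i y < length I"
    using assms(3) next_req by blast
  ultimately show ?thesis
    using arg_max_nat_lemma[of "\<lambda>y. y \<in> C" x "next_req I i" "length I"] assms(2) by simp
qed

lemma evict_page_eq: "A h C \<in> C \<Longrightarrow> evict_page A h C = A h C"
  by (simp add: evict_page_def)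

locale lfd_run =
  fixes k :: nat and tb :: "nat \<Rightarrow> nat set \<Rightarrow> nat" and I :: "nat list"
  assumes k_pos: "k \<ge> 1" and valid_tb: "valid_tiebreak tb"
    and pages_le_k: "\<And>j. j < length I \<Longrightarrow> I ! j \<le> k"
begin

abbreviation "n \<equiv> length I"
abbreviation "xs \<equiv> inp I (\<lambda>_. False)"
abbreviation "LFD \<equiv> lfd_choose tb I"

definition "lcache j = cache k LFD xs j"
definition "victim j = evict_page LFD (take (Suc j) xs) (lcache j)"
definition "full_faults = {j. j < n \<and> I ! j \<notin> lcache j \<and> card (lcache j) = k}"
definition "cold_faults = {j. j < n \<and> I ! j \<notin> lcache j \<and> card (lcache j) < k}"
definition "discarded = {i. i < n \<and> pstar_disc k tb I i}"

lemma fst_xs [simp]: "j < n \<Longrightarrow> fst (xs ! j) = I ! j"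
  by (simp add: inp_nth)

lemma lcache_finite_card: "finite (lcache j) \<and> card (lcache j) \<le> k"
  unfolding lcache_def by (rule cache_finite_card[OF k_pos])

lemma lcache_pages: "j \<le> n \<Longrightarrow> lcache j \<subseteq> {0..k}"
  using cache_subset_requests[of k LFD xs j] pages_le_k by (force simp: lcache_def)

lemma lcache_subset_requests: "j \<le> n \<Longrightarrow> lcache j \<subseteq> {I ! m | m. m < j}"
  using cache_subset_requests[of k LFD xs j] by (force simp: lcache_def)

lemma lcache_hit: "j < n \<Longrightarrow> I ! j \<in> lcache j \<Longrightarrow> lcache (Suc j) = lcache j"
  using cache_hit[of xs j k LFD "[]" "{}"] by (simp add: lcache_def)

lemma lcache_cold_fault: "j \<in> cold_faults \<Longrightarrow> lcache (Suc j) = insert (I ! j) (lcache j)"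
  using cache_fault_not_full[of xs j k LFD "[]" "{}"] by (simp add: lcache_def cold_faults_def)

lemma request_in_lcache_Suc: "j < n \<Longrightarrow> I ! j \<in> lcache (Suc j)"
  using request_in_cache_Suc[of xs j k LFD "[]" "{}"] by (simp add: lcache_def)

lemma lcache_full_fault:
  assumes "j \<in> full_faults"
  shows "victim j \<in> lcache j" "lcache (Suc j) = insert (I ! j) (lcache j - {victim j})"
  using cache_fault_full[OF k_pos, of xs j LFD] assms
  by (simp_all add: lcache_def victim_def full_faults_def)

lemma victim_evicted:
  assumes "j \<in> full_faults"
  shows "I ! j \<noteq> victim j" "victim j \<notin> lcache (Suc j)"
  using lcache_full_fault[OF assms] assms by (auto simp: full_faults_def)

lemma lcache_const_on_hits:
  assumes "a \<le> b" "b \<le> n" "\<And>m. a \<le> m \<Longrightarrow> m < b \<Longrightarrow> I ! m \<in> lcache m"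
  shows "lcache b = lcache a"
  using assms
proof (induction b rule: dec_induct)
  case base
  then show ?case by simp
next
  case (step m)
  have "I ! m \<in> lcache m"
    using step.prems(2)[OF step.hyps(1) lessI] .
  with step show ?case
    using lcache_hit[of m] by simp
qed

lemma victim_eq_lfd_choose: "t \<in> full_faults \<Longrightarrow> victim t = LFD (take (Suc t) xs) (lcache t)"
proof -
  assume t: "t \<in> full_faults"
  then have len: "length (take (Suc t) xs) = Suc t"
    by (simp add: full_faults_def)
  have "victim t \<in> lcache t"
    using lcache_full_fault[OF t] by simp
  then have "LFD (take (Suc t) xs) (lcache t) \<in> lcache t"
    using lfd_choose_furthest[OF len] lfd_choose_unrequested[OF valid_tb _ len] lcache_finite_card
    by blast
  then show ?thesis
    unfolding victim_def by (rule evict_page_eq)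
qed

lemma victim_furthest:
  assumes t: "t \<in> full_faults" and "requested_after I t (victim t)"
  shows "\<forall>y\<in>lcache t. requested_after I t y \<and> next_req I t y \<le> next_req I t (victim t)"
proof -
  have len: "length (take (Suc t) xs) = Suc t"
    using t by (simp add: full_faults_def)
  have "\<forall>y\<in>lcache t. requested_after I t y"
    using lfd_choose_unrequested[OF valid_tb _ len] lcache_finite_card victim_eq_lfd_choose[OF t]
      assms(2) by metis
  then show ?thesis
    using lfd_choose_furthest[OF len lcache_full_fault(1)[OF t]] victim_eq_lfd_choose[OF t] by simp
qed

(* LFD evicted the page requested furthest in the future, so the other k - 1 cached pages
   are all requested before the victim returns. *)
lemma victim_requested_late:
  assumes t: "t \<in> full_faults" and t': "t < t'" "t' < n" "I ! t' = victim t"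
  shows "t + k \<le> t'"
proof -
  let ?C = "lcache t"
  have "requested_after I t (victim t)"
    using t' by (auto simp: requested_after_def)
  then have all_requested: "\<forall>y\<in>?C. requested_after I t y"
    and furthest: "\<forall>y\<in>?C. next_req I t y \<le> next_req I t (victim t)"
    using victim_furthest[OF t] by simp_all
  have "next_req I t (victim t) \<le> t'"
    using t' by (intro next_req_le) auto
  have between: "next_req I t y \<in> {t<..<t'}" if y: "y \<in> ?C - {victim t}" for y
  proof -
    have "t < next_req I t y" "I ! next_req I t y = y"
      using next_req all_requested y by auto
    moreover have "next_req I t y \<le> t'"
      using furthest y \<open>next_req I t (victim t) \<le> t'\<close> by force
    moreover have "next_req I t y \<noteq> t'"
      using y t'(3) calculation(2) by auto
    ultimately show ?thesis
      by auto
  qed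
  have inj: "inj_on (next_req I t) (?C - {victim t})"
  proof (rule inj_onI)
    fix y z
    assume "y \<in> ?C - {victim t}" "z \<in> ?C - {victim t}" "next_req I t y = next_req I t z"
    then show "y = z"
      using next_req all_requested by (metis DiffD1)
  qed
  have "next_req I t ` (?C - {victim t}) \<subseteq> {t<..<t'}"
    using between by blast
  then have "card (?C - {victim t}) \<le> card {t<..<t'}"
    using card_inj_on_le[OF inj] by blast
  then show ?thesis
    using t t'(1) lcache_full_fault(1)[OF t] lcache_finite_card k_pos by (simp add: full_faults_def)
qed

lemma lcache_after_full_fault:
  assumes t: "t \<in> full_faults"
  shows "lcache (Suc t) = {0..k} - {victim t}"
proof -
  have t_props: "t < n" "I ! t \<notin> lcache t" "card (lcache t) = k"
    using t by (auto simp: full_faults_def)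
  have before: "lcache t = {0..k} - {I ! t}"
  proof (rule card_subset_eq)
    show "lcache t \<subseteq> {0..k} - {I ! t}"
      using lcache_pages[of t] t_props by auto
    show "card (lcache t) = card ({0..k} - {I ! t})"
      using t_props pages_le_k[of t] by simp
  qed simp
  have "lcache (Suc t) = insert (I ! t) ({0..k} - {I ! t} - {victim t})"
    using lcache_full_fault(2)[OF t] by (simp only: before)
  also have "\<dots> = {0..k} - {victim t}"
    using victim_evicted(1)[OF t] pages_le_k[OF t_props(1)] by auto
  finally show ?thesis .
qed

lemma full_fault_gap:
  assumes t: "t \<in> full_faults" and t': "t < t'" "t' < n" "I ! t' \<notin> lcache t'"
  shows "t + k \<le> t'"
proof -
  define P where "P x \<longleftrightarrow> t < x \<and> x < n \<and> I ! x \<notin> lcache x" for x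
  define t0 where "t0 = (LEAST x. P x)"
  have "P t'"
    using t' by (simp add: P_def)
  then have P_t0: "P t0" and "t0 \<le> t'"
    unfolding t0_def by (auto intro: LeastI Least_le)
  have "lcache t0 = lcache (Suc t)"
  proof (rule lcache_const_on_hits)
    fix m
    assume "Suc t \<le> m" "m < t0"
    then show "I ! m \<in> lcache m"
      using not_less_Least[of m P] P_t0 unfolding t0_def P_def by auto
  qed (use P_t0 in \<open>auto simp: P_def\<close>)
  then have "I ! t0 = victim t"
    using P_t0 lcache_after_full_fault[OF t] pages_le_k[of t0] by (auto simp: P_def)
  then have "t + k \<le> t0"
    using P_t0 by (intro victim_requested_late[OF t]) (auto simp: P_def)
  with \<open>t0 \<le> t'\<close> show ?thesis
    by simp
qed

lemma cost_lfd: "cost k LFD [] {} xs = card (cold_faults \<union> full_faults)"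
proof -
  have "{j. j < length xs \<and> fst (xs ! j) \<notin> cache k LFD xs j} = cold_faults \<union> full_faults"
  proof (intro set_eqI iffI)
    fix j
    assume "j \<in> {j. j < length xs \<and> fst (xs ! j) \<notin> cache k LFD xs j}"
    then have "j < n" "I ! j \<notin> lcache j"
      by (auto simp: lcache_def)
    then show "j \<in> cold_faults \<union> full_faults"
      using lcache_finite_card[of j] by (auto simp: cold_faults_def full_faults_def)
  qed (auto simp: cold_faults_def full_faults_def lcache_def)
  then show ?thesis
    unfolding cost_eq_card_faults by simp
qed

lemma card_cold_faults: "card cold_faults \<le> k"
proof -
  have "card (lcache a) < card (lcache b)" if "a \<in> cold_faults" "a < b" for a b
  proof -
    have "card (lcache (Suc a)) = Suc (card (lcache a))"
      using that(1) lcache_cold_fault lcache_finite_card by (simp add: cold_faults_def)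
    moreover have "Suc a \<le> b"
      using that(2) by simp
    then have "card (lcache (Suc a)) \<le> card (lcache b)"
      unfolding lcache_def by (rule card_cache_mono[OF k_pos])
    ultimately show ?thesis
      by simp
  qed
  then have "strict_mono_on cold_faults (\<lambda>j. card (lcache j))"
    by (intro strict_mono_onI) simp
  then have "inj_on (\<lambda>j. card (lcache j)) cold_faults"
    by (rule strict_mono_on_imp_inj_on)
  moreover have "(\<lambda>j. card (lcache j)) ` cold_faults \<subseteq> {..<k}"
    by (auto simp: cold_faults_def)
  ultimately have "card cold_faults \<le> card {..<k}"
    using finite_lessThan by (rule card_inj_on_le)
  then show ?thesis
    by simp
qed

lemma card_full_faults: "k * card full_faults \<le> n + k - 1"
  by (rule card_sparse_set) (auto simp: full_faults_def intro: full_fault_gap)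

lemma cost_lfd_le: "cost k LFD [] {} xs \<le> k + card full_faults"
  using cost_lfd card_Un_le[of cold_faults full_faults] card_cold_faults by simp

lemma pstar_disc_iff:
  "pstar_disc k tb I i \<longleftrightarrow>
    (\<exists>j. i \<le> j \<and> j < n \<and> (\<forall>l. i < l \<and> l \<le> j \<longrightarrow> I ! l \<noteq> I ! i) \<and> I ! i \<notin> lcache (Suc j))"
  unfolding pstar_disc_def lfd_trace_def lcache_def using trace_nth_cache_state by auto

lemma leaving_lcache_evicted:
  assumes "j < n" "x \<in> lcache j" "x \<notin> lcache (Suc j)"
  shows "j \<in> full_faults \<and> victim j = x"
proof -
  have "I ! j \<notin> lcache j"
    using lcache_hit[OF assms(1)] assms(2,3) by blast
  moreover have "\<not> card (lcache j) < k"
  proof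
    assume "card (lcache j) < k"
    then have "j \<in> cold_faults"
      using assms(1) \<open>I ! j \<notin> lcache j\<close> by (simp add: cold_faults_def)
    then show False
      using lcache_cold_fault assms(2,3) by blast
  qed
  ultimately have "j \<in> full_faults"
    using assms(1) lcache_finite_card[of j] by (simp add: full_faults_def)
  moreover have "victim j = x"
    using lcache_full_fault[OF \<open>j \<in> full_faults\<close>] assms(2,3) request_in_lcache_Suc[OF assms(1)]
    by auto
  ultimately show ?thesis ..
qed

lemma discarded_evicted:
  assumes "i \<in> discarded"
  shows "\<exists>j\<in>full_faults. i < j \<and> victim j = I ! i \<and> (\<forall>l. i < l \<and> l \<le> j \<longrightarrow> I ! l \<noteq> I ! i)"
proof -
  define Q where
    "Q j \<longleftrightarrow> i \<le> j \<and> j < n \<and> (\<forall>l. i < l \<and> l \<le> j \<longrightarrow> I ! l \<noteq> I ! i) \<and> I ! i \<notin> lcache (Suc j)"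
    for j
  define j where "j = (LEAST j. Q j)"
  have "\<exists>j. Q j"
    using assms by (simp add: discarded_def pstar_disc_iff Q_def)
  then have Q_j: "Q j"
    unfolding j_def by (rule LeastI_ex)
  have i_n: "i < n"
    using assms by (simp add: discarded_def)
  have "j \<noteq> i"
    using Q_j request_in_lcache_Suc[OF i_n] by (auto simp: Q_def)
  then have "i < j"
    using Q_j by (simp add: Q_def)
  have "j - 1 < j"
    using \<open>i < j\<close> by simp
  then have "\<not> Q (j - 1)"
    unfolding j_def by (rule not_less_Least)
  moreover have "i \<le> j - 1" "j - 1 < n" "\<forall>l. i < l \<and> l \<le> j - 1 \<longrightarrow> I ! l \<noteq> I ! i"
    using Q_j \<open>i < j\<close> by (auto simp: Q_def)
  ultimately have "I ! i \<in> lcache (Suc (j - 1))"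
    by (simp add: Q_def)
  then have "I ! i \<in> lcache j"
    using \<open>i < j\<close> by simp
  moreover have "j < n" "I ! i \<notin> lcache (Suc j)"
    using Q_j by (auto simp: Q_def)
  ultimately have "j \<in> full_faults \<and> victim j = I ! i"
    using leaving_lcache_evicted by blast
  then show ?thesis
    using \<open>i < j\<close> Q_j by (auto simp: Q_def)
qed

lemma card_discarded_le: "card discarded \<le> card full_faults"
proof -
  obtain f where f: "\<And>i. i \<in> discarded \<Longrightarrow> f i \<in> full_faults \<and> i < f i \<and> victim (f i) = I ! i
      \<and> (\<forall>l. i < l \<and> l \<le> f i \<longrightarrow> I ! l \<noteq> I ! i)"
    using discarded_evicted by metis
  have "inj_on f discarded"
  proof (rule inj_onI, rule ccontr)
    fix a b
    assume ab: "a \<in> discarded" "b \<in> discarded" "f a = f b" "a \<noteq> b"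
    then have same_page: "I ! a = I ! b"
      using f by metis
    have "a < b \<or> b < a"
      using ab(4) by arith
    then show False
      using f[OF ab(1)] f[OF ab(2)] ab(3) same_page by auto
  qed
  moreover have "f ` discarded \<subseteq> full_faults"
    using f by blast
  moreover have "finite full_faults"
    by (simp add: full_faults_def)
  ultimately show ?thesis
    by (rule card_inj_on_le)
qed

lemma victim_last_request:
  assumes j: "j \<in> full_faults"
  shows "\<exists>i<j. I ! i = victim j \<and> (\<forall>l. i < l \<and> l < j \<longrightarrow> I ! l \<noteq> victim j) \<and> i \<in> discarded"
proof -
  let ?R = "{m. m < j \<and> I ! m = victim j}"
  define i where "i = Max ?R"
  have j_n: "j < n"
    using j by (simp add: full_faults_def)
  have "victim j \<in> lcache j"
    using lcache_full_fault(1)[OF j] .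
  then have "?R \<noteq> {}"
    using lcache_subset_requests[of j] j_n by force
  then have i: "i < j" "I ! i = victim j"
    using Max_in[of ?R] unfolding i_def by auto
  have last: "\<forall>l. i < l \<and> l < j \<longrightarrow> I ! l \<noteq> victim j"
    using Max_ge[of ?R] unfolding i_def by fastforce
  have "pstar_disc k tb I i"
    unfolding pstar_disc_iff
  proof (intro exI conjI allI impI)
    show "i \<le> j" "j < n"
      using i j_n by simp_all
    show "I ! i \<notin> lcache (Suc j)"
      using i victim_evicted(2)[OF j] by simp
    fix l
    assume "i < l \<and> l \<le> j"
    then show "I ! l \<noteq> I ! i"
      using i last victim_evicted(1)[OF j] by (cases "l = j") auto
  qed
  then show ?thesis
    using i last j_n by (auto simp: discarded_def)
qed

lemma card_full_faults_le: "card full_faults \<le> card discarded"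
proof -
  obtain g where g: "\<And>j. j \<in> full_faults \<Longrightarrow> g j < j \<and> I ! g j = victim j
      \<and> (\<forall>l. g j < l \<and> l < j \<longrightarrow> I ! l \<noteq> victim j) \<and> g j \<in> discarded"
    using victim_last_request by metis
  have no_sharing: False
    if ab: "a \<in> full_faults" "b \<in> full_faults" "g a = g b" "a < b" for a b
  proof -
    have same_victim: "victim a = victim b"
      using g[OF ab(1)] g[OF ab(2)] ab(3) by simp
    have "victim a \<notin> lcache (Suc a)" "victim a \<in> lcache b"
      using victim_evicted(2)[OF ab(1)] lcache_full_fault(1)[OF ab(2)] same_victim by simp_all
    then obtain m where m: "Suc a \<le> m" "m < b" "fst (xs ! m) = victim a"
      using enters_cache_only_when_requested[of "victim a" k LFD "[]" "{}" xs "Suc a" b] ab(4)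
      unfolding lcache_def by auto
    have "b < n"
      using ab(2) by (simp add: full_faults_def)
    then have "I ! m = victim b"
      using m same_victim by simp
    moreover have "g b < m"
      using g[OF ab(1)] ab(3) m(1) by simp
    ultimately show False
      using g[OF ab(2)] m(2) by blast
  qed
  have "inj_on g full_faults"
    by (rule inj_onI) (metis no_sharing linorder_neqE_nat)
  moreover have "g ` full_faults \<subseteq> discarded"
    using g by blast
  moreover have "finite discarded"
    by (simp add: discarded_def)
  ultimately show ?thesis
    by (rule card_inj_on_le)
qed

lemma card_discarded: "card discarded = card full_faults"
  using card_discarded_le card_full_faults_le by simp

lemma OPT_le_discarded: "OPT k I \<le> card discarded + k"
  using OPT_le_cost[of k I LFD] cost_lfd_le card_discarded by simp

lemma card_discarded_real: "real (card discarded) \<le> real n / real k + 1"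
proof -
  have "k * card discarded \<le> n + k"
    using card_full_faults card_discarded by simp
  then have "real k * real (card discarded) \<le> real n + real k"
    by (metis of_nat_add of_nat_le_iff of_nat_mult)
  then show ?thesis
    using k_pos by (simp add: field_simps)
qed

lemma OPT_le_real: "real (OPT k I) \<le> real n / real k + real k + 1"
  using OPT_le_discarded card_discarded_real by (smt (verit) of_nat_add of_nat_le_iff)

lemma eta_disc_all_0: "eta_disc k tb False I (\<lambda>_. False) = card discarded"
  by (simp add: eta_disc_def discarded_def)

lemma eta_disc_all_1: "eta_disc k tb True I (\<lambda>_. True) + card discarded = n"
proof -
  have "eta_disc k tb True I (\<lambda>_. True) = card ({..<n} - discarded)"
    unfolding eta_disc_def discarded_def by (rule arg_cong[where f = card]) auto
  also have "\<dots> = n - card discarded"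
    by (subst card_Diff_subset) (auto simp: discarded_def)
  finally show ?thesis
    using card_mono[of "{..<n}" discarded] by (force simp: discarded_def)
qed

end

section \<open>Phases\<close>

definition phase_step :: "nat \<Rightarrow> nat \<times> nat set \<Rightarrow> nat \<Rightarrow> nat \<times> nat set" where
  "phase_step k s r =
     (if card (insert r (snd s)) \<le> k then (fst s, insert r (snd s)) else (Suc (fst s), {r}))"

lemma phase_ids_nth:
  "m < length rs \<Longrightarrow> phase_ids k j S rs ! m = fst (foldl (phase_step k) (j, S) (take (Suc m) rs))"
proof (induction rs arbitrary: j S m)
  case Nil
  then show ?case by simp
next
  case (Cons r rs)
  then show ?case
    by (cases m) (simp_all add: phase_step_def)
qed

fun phase_state :: "nat \<Rightarrow> nat list \<Rightarrow> nat \<Rightarrow> nat \<times> nat set" where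
  "phase_state k I 0 = phase_step k (0, {}) (I ! 0)"
| "phase_state k I (Suc i) = phase_step k (phase_state k I i) (I ! Suc i)"

lemma foldl_phase_step: "i < length I \<Longrightarrow> foldl (phase_step k) (0, {}) (take (Suc i) I) = phase_state k I i"
proof (induction i)
  case 0
  then show ?case by (cases I) auto
next
  case (Suc i)
  then show ?case by (simp add: take_Suc_conv_app_nth)
qed

lemma phase_eq_phase_state: "i < length I \<Longrightarrow> phase k I i = fst (phase_state k I i)"
  unfolding phase_def using phase_ids_nth foldl_phase_step by simp

locale phase_run =
  fixes k :: nat and I :: "nat list"
  assumes k_pos: "k \<ge> 1"
begin

abbreviation "n \<equiv> length I"
definition "ph i = fst (phase_state k I i)"
definition "seen i = snd (phase_state k I i)"
definition "phase_pages j = {I ! m | m. m < n \<and> ph m = j}"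
definition "counted_true = {i. counted k I i \<and> pstar_phase k I i}"
definition "counted_false = {i. counted k I i \<and> \<not> pstar_phase k I i}"

lemma ph_0: "ph 0 = 0" and seen_0: "seen 0 = {I ! 0}"
  using k_pos by (auto simp: ph_def seen_def phase_step_def)

lemma phase_Suc_cases:
  obtains (same) "ph (Suc i) = ph i" "seen (Suc i) = insert (I ! Suc i) (seen i)"
      "card (insert (I ! Suc i) (seen i)) \<le> k"
    | (new) "ph (Suc i) = Suc (ph i)" "seen (Suc i) = {I ! Suc i}"
      "\<not> card (insert (I ! Suc i) (seen i)) \<le> k"
  by (cases "card (insert (I ! Suc i) (seen i)) \<le> k") (auto simp: ph_def seen_def phase_step_def)

lemma seen_finite_card: "finite (seen i) \<and> card (seen i) \<le> k"
proof (induction i)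
  case 0
  then show ?case using seen_0 k_pos by simp
next
  case (Suc i)
  then show ?case
    using k_pos by (cases rule: phase_Suc_cases[of i]) auto
qed

lemma ph_Suc: "ph i \<le> ph (Suc i) \<and> ph (Suc i) \<le> Suc (ph i)"
  by (cases rule: phase_Suc_cases[of i]) auto

lemma ph_mono: "a \<le> b \<Longrightarrow> ph a \<le> ph b"
  by (rule lift_Suc_mono_le) (use ph_Suc in auto)

lemma seen_eq: "seen i = {I ! m | m. m \<le> i \<and> ph m = ph i}"
proof (induction i)
  case 0
  then show ?case using seen_0 by auto
next
  case (Suc i)
  show ?case
  proof (cases rule: phase_Suc_cases[of i])
    case same
    then show ?thesis
      using Suc.IH by (auto simp: le_Suc_eq)
  next
    case new
    have "m = Suc i" if "m \<le> Suc i" "ph m = ph (Suc i)" for m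
      using that new ph_mono[of m i] by (cases "m = Suc i") auto
    then show ?thesis
      using new by auto
  qed
qed

lemma ph_count: "k * ph i + card (seen i) \<le> Suc i"
proof (induction i)
  case 0
  then show ?case using ph_0 seen_0 by simp
next
  case (Suc i)
  have "card (insert (I ! Suc i) (seen i)) \<le> Suc (card (seen i))"
    using seen_finite_card[of i] by (simp add: card_insert_if)
  then show ?case
    using Suc by (cases rule: phase_Suc_cases[of i]) auto
qed

lemma phases_bound: "n \<ge> 1 \<Longrightarrow> k * ph (n - 1) \<le> n"
  using ph_count[of "n - 1"] by simp

lemma ph_attained: "j \<le> ph i \<Longrightarrow> \<exists>m\<le>i. ph m = j"
proof (induction i)
  case 0
  then show ?case using ph_0 by simp
next
  case (Suc i)
  show ?case
  proof (cases "j = ph (Suc i)")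
    case True
    then show ?thesis by blast
  next
    case False
    then have "j \<le> ph i"
      using Suc.prems ph_Suc[of i] by linarith
    then show ?thesis
      using Suc.IH le_Suc_eq by blast
  qed
qed

lemma phase_pages_eq_seen:
  "e < n \<Longrightarrow> ph e = j \<Longrightarrow> (\<And>m. m < n \<Longrightarrow> ph m = j \<Longrightarrow> m \<le> e) \<Longrightarrow> phase_pages j = seen e"
  unfolding phase_pages_def seen_eq by force

lemma phase_last_request:
  assumes "m < n" "ph m = j"
  obtains e where "e < n" "ph e = j" "\<And>m. m < n \<Longrightarrow> ph m = j \<Longrightarrow> m \<le> e"
proof -
  let ?E = "{m. m < n \<and> ph m = j}"
  have "finite ?E" "m \<in> ?E"
    using assms by auto
  then show ?thesis
    using that[of "Max ?E"] Max_in[of ?E] Max_ge[of ?E] by blast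
qed

lemma phase_pages_finite_card: "finite (phase_pages j) \<and> card (phase_pages j) \<le> k"
proof (cases "\<exists>m. m < n \<and> ph m = j")
  case True
  then obtain e where "e < n" "ph e = j" "\<And>m. m < n \<Longrightarrow> ph m = j \<Longrightarrow> m \<le> e"
    using phase_last_request by blast
  then have "phase_pages j = seen e"
    by (rule phase_pages_eq_seen)
  then show ?thesis
    using seen_finite_card by simp
next
  case False
  then have "phase_pages j = {}"
    by (auto simp: phase_pages_def)
  then show ?thesis
    by simp
qed

lemma phase_boundary:
  assumes "n \<ge> 1" "j < ph (n - 1)"
  obtains e where "Suc e < n" "ph e = j" "ph (Suc e) = Suc j" "phase_pages j = seen e"
    "card (seen e) = k" "I ! Suc e \<notin> seen e" "I ! Suc e \<in> phase_pages (Suc j)"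
proof -
  obtain m0 where "m0 \<le> n - 1" "ph m0 = j"
    using ph_attained assms(2) less_imp_le by blast
  moreover from this(1) have "m0 < n"
    using assms(1) by linarith
  ultimately obtain e where e: "e < n" "ph e = j" "\<And>m. m < n \<Longrightarrow> ph m = j \<Longrightarrow> m \<le> e"
    by (metis phase_last_request)
  have "e \<noteq> n - 1"
    using e(2) assms(2) by auto
  then have Suc_e: "Suc e < n"
    using e(1) by linarith
  have "ph (Suc e) \<noteq> j"
    using e(3)[of "Suc e"] Suc_e by auto
  then have ph_Suc_e: "ph (Suc e) = Suc j"
    using ph_Suc[of e] e(2) by simp
  then have full: "\<not> card (insert (I ! Suc e) (seen e)) \<le> k"
    using e(2) by (cases rule: phase_Suc_cases[of e]) simp_all
  have fresh: "I ! Suc e \<notin> seen e"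
  proof
    assume "I ! Suc e \<in> seen e"
    then have "insert (I ! Suc e) (seen e) = seen e"
      by (rule insert_absorb)
    with full seen_finite_card[of e] show False
      by simp
  qed
  then have "card (seen e) = k"
    using full seen_finite_card[of e] by simp
  moreover have "phase_pages j = seen e"
    using e by (rule phase_pages_eq_seen)
  moreover have "I ! Suc e \<in> phase_pages (Suc j)"
    using Suc_e ph_Suc_e by (auto simp: phase_pages_def)
  ultimately show ?thesis
    using that[OF Suc_e e(2) ph_Suc_e _ _ fresh] by blast
qed

lemma counted_iff:
  "n \<ge> 1 \<Longrightarrow> counted k I i \<longleftrightarrow>
    i < n \<and> ph i \<noteq> ph (n - 1) \<and> (\<forall>l. i < l \<and> l < n \<and> ph l = ph i \<longrightarrow> I ! l \<noteq> I ! i)"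
  unfolding counted_def using phase_eq_phase_state[of _ I k] by (auto simp: ph_def)

lemma pstar_phase_iff:
  assumes "i < n"
  shows "pstar_phase k I i \<longleftrightarrow> I ! i \<notin> phase_pages (Suc (ph i))"
proof -
  have "(\<exists>l<n. phase k I l = phase k I i + 1 \<and> I ! l = I ! i) \<longleftrightarrow>
      (\<exists>l<n. ph l = Suc (ph i) \<and> I ! l = I ! i)"
    using phase_eq_phase_state[of _ I k] assms by (auto simp: ph_def)
  then show ?thesis
    by (auto simp: pstar_phase_def phase_pages_def)
qed

lemma counted_ph_less: "n \<ge> 1 \<Longrightarrow> counted k I i \<Longrightarrow> ph i < ph (n - 1)"
  using counted_iff ph_mono[of i "n - 1"] by fastforce

lemma counted_inj_on_phase:
  "n \<ge> 1 \<Longrightarrow> inj_on (\<lambda>i. I ! i) {i. counted k I i \<and> ph i = j}"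
  using counted_iff by (auto simp: inj_on_def) (metis linorder_neqE_nat)

lemma card_counted_false_phase:
  assumes "n \<ge> 1" "j < ph (n - 1)"
  shows "card {i \<in> counted_false. ph i = j} \<le> k - 1"
proof -
  obtain e where e: "phase_pages j = seen e" "I ! Suc e \<notin> seen e" "I ! Suc e \<in> phase_pages (Suc j)"
    using phase_boundary[OF assms] by metis
  have "(\<lambda>i. I ! i) ` {i \<in> counted_false. ph i = j} \<subseteq> phase_pages (Suc j) - {I ! Suc e}"
  proof
    fix x
    assume "x \<in> (\<lambda>i. I ! i) ` {i \<in> counted_false. ph i = j}"
    then obtain i where i: "i \<in> counted_false" "ph i = j" "x = I ! i"
      by blast
    then have "i < n"
      using counted_iff[OF assms(1)] by (auto simp: counted_false_def)
    then have "x \<in> phase_pages j" "x \<in> phase_pages (Suc j)"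
      using i pstar_phase_iff by (auto simp: phase_pages_def counted_false_def)
    then show "x \<in> phase_pages (Suc j) - {I ! Suc e}"
      using e by auto
  qed
  moreover have "inj_on (\<lambda>i. I ! i) {i \<in> counted_false. ph i = j}"
    using counted_inj_on_phase[OF assms(1), of j] by (rule inj_on_subset) (auto simp: counted_false_def)
  ultimately have "card {i \<in> counted_false. ph i = j} \<le> card (phase_pages (Suc j) - {I ! Suc e})"
    using phase_pages_finite_card by (intro card_inj_on_le) auto
  also have "\<dots> = card (phase_pages (Suc j)) - 1"
    using phase_pages_finite_card e(3) by (simp add: card_Diff_singleton)
  also have "\<dots> \<le> k - 1"
    using phase_pages_finite_card[of "Suc j"] by (simp add: diff_le_mono)
  finally show ?thesis .
qed

lemma card_counted_false:
  assumes "n \<ge> 1"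
  shows "card counted_false \<le> (k - 1) * ph (n - 1)"
proof -
  have "counted_false = (\<Union>j<ph (n - 1). {i \<in> counted_false. ph i = j})"
    using counted_ph_less[OF assms] by (auto simp: counted_false_def)
  then have "card counted_false \<le> (\<Sum>j<ph (n - 1). card {i \<in> counted_false. ph i = j})"
    by (metis card_UN_le finite_lessThan)
  also have "\<dots> \<le> (\<Sum>j<ph (n - 1). k - 1)"
    using card_counted_false_phase[OF assms] by (intro sum_mono) simp
  finally show ?thesis
    by (simp add: mult.commute)
qed

(* Each such request asks for the unique page of {0..k} missing from the full next phase,
   so there is at most one per phase. *)
lemma card_counted_true_early:
  assumes "n \<ge> 1" and pages: "\<And>j. j < n \<Longrightarrow> I ! j \<le> k"
  shows "card {i \<in> counted_true. Suc (ph i) < ph (n - 1)} \<le> ph (n - 1)"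
proof -
  let ?X = "{i \<in> counted_true. Suc (ph i) < ph (n - 1)}"
  have "inj_on ph ?X"
  proof (rule inj_onI)
    fix a b
    assume ab: "a \<in> ?X" "b \<in> ?X" "ph a = ph b"
    obtain e where e: "phase_pages (Suc (ph a)) = seen e" "card (seen e) = k"
      using phase_boundary[OF assms(1), of "Suc (ph a)"] ab(1) by auto
    have n: "a < n" "b < n"
      using ab counted_iff[OF assms(1)] by (auto simp: counted_true_def)
    have sub: "phase_pages (Suc (ph a)) \<subseteq> {0..k}"
      using pages by (auto simp: phase_pages_def)
    have "card ({0..k} - phase_pages (Suc (ph a))) = 1"
      using e sub card_Diff_subset[OF finite_subset[OF sub]] by simp
    then obtain z where z: "{0..k} - phase_pages (Suc (ph a)) = {z}"
      by (rule card_1_singletonE)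
    have "I ! a \<in> {0..k} - phase_pages (Suc (ph a))" "I ! b \<in> {0..k} - phase_pages (Suc (ph a))"
      using ab n pages pstar_phase_iff by (auto simp: counted_true_def)
    then have "I ! a = I ! b"
      unfolding z by simp
    then show "a = b"
      using counted_inj_on_phase[OF assms(1), of "ph a"] ab by (auto simp: counted_true_def inj_on_def)
  qed
  moreover have "ph ` ?X \<subseteq> {..<ph (n - 1)}"
    by auto
  ultimately show ?thesis
    using card_inj_on_le[of ph ?X "{..<ph (n - 1)}"] by simp
qed

lemma card_counted_true_penultimate:
  assumes "n \<ge> 1" and pages: "\<And>j. j < n \<Longrightarrow> I ! j \<le> k"
  shows "card {i \<in> counted_true. Suc (ph i) = ph (n - 1)} \<le> k + 1"
proof -
  let ?X = "{i \<in> counted_true. Suc (ph i) = ph (n - 1)}"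
  have "inj_on (\<lambda>i. I ! i) ?X"
    using counted_inj_on_phase[OF assms(1), of "ph (n - 1) - 1"]
    by (rule inj_on_subset) (auto simp: counted_true_def)
  moreover have "(\<lambda>i. I ! i) ` ?X \<subseteq> {0..k}"
    using pages counted_iff[OF assms(1)] by (auto simp: counted_true_def)
  ultimately show ?thesis
    using card_inj_on_le[of "\<lambda>i. I ! i" ?X "{0..k}"] by simp
qed

lemma card_counted_true:
  assumes "n \<ge> 1" and pages: "\<And>j. j < n \<Longrightarrow> I ! j \<le> k"
  shows "card counted_true \<le> ph (n - 1) + (k + 1)"
proof -
  let ?early = "{i \<in> counted_true. Suc (ph i) < ph (n - 1)}"
  let ?late = "{i \<in> counted_true. Suc (ph i) = ph (n - 1)}"
  have "counted_true \<subseteq> ?early \<union> ?late"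
  proof
    fix i
    assume "i \<in> counted_true"
    moreover from this have "ph i < ph (n - 1)"
      using counted_ph_less[OF assms(1)] by (simp add: counted_true_def)
    ultimately show "i \<in> ?early \<union> ?late"
      by auto
  qed
  moreover have "finite (?early \<union> ?late)"
    by (rule finite_subset[of _ "{..<n}"]) (auto simp: counted_true_def counted_def)
  ultimately have "card counted_true \<le> card (?early \<union> ?late)"
    by (rule card_mono[rotated])
  also have "\<dots> \<le> card ?early + card ?late"
    by (rule card_Un_le)
  finally show ?thesis
    using card_counted_true_early[OF assms] card_counted_true_penultimate[OF assms] by simp
qed

lemma ph_last_real: "n \<ge> 1 \<Longrightarrow> real (ph (n - 1)) \<le> real n / real k"
  using phases_bound k_pos by (simp add: field_simps flip: of_nat_mult)

lemma card_counted_true_real: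
  assumes "n \<ge> 1" and "\<And>j. j < n \<Longrightarrow> I ! j \<le> k"
  shows "real (card counted_true) \<le> real n / real k + real k + 1"
  using card_counted_true[OF assms] ph_last_real[OF assms(1)] by linarith

lemma card_counted_false_real:
  assumes "n \<ge> 1"
  shows "real (card counted_false) \<le> (real k - 1) * (real n / real k)"
proof -
  have "real (card counted_false) \<le> real ((k - 1) * ph (n - 1))"
    using card_counted_false[OF assms] by (simp only: of_nat_le_iff)
  also have "\<dots> = (real k - 1) * real (ph (n - 1))"
    using k_pos by (simp add: of_nat_diff)
  also have "\<dots> \<le> (real k - 1) * (real n / real k)"
    using ph_last_real[OF assms] k_pos by (intro mult_left_mono) auto
  finally show ?thesis .
qed

end

section \<open>Lower bounds\<close>

lemma slope_ge_1_if_linear_bound: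
  fixes \<theta> K :: real
  assumes "\<And>N::nat. N \<ge> 1 \<Longrightarrow> real N \<le> \<theta> * real N + K"
  shows "\<theta> \<ge> 1"
proof (rule ccontr)
  assume "\<not> \<theta> \<ge> 1"
  obtain N :: nat where N: "max 1 (K / (1 - \<theta>)) < real N"
    using reals_Archimedean2 by blast
  then have "K < real N * (1 - \<theta>)"
    using \<open>\<not> \<theta> \<ge> 1\<close> by (simp add: divide_less_eq)
  moreover have "real N \<le> \<theta> * real N + K"
    using N by (intro assms) simp
  ultimately show False
    by (simp add: algebra_simps)
qed

lemma not_competitive_if_hard_instances:
  assumes "\<theta> < 1"
    and alg: "\<And>N. N \<ge> 1 \<Longrightarrow> real N \<le> real (ALG k A (J N) (q N))"
    and bound: "\<And>N. N \<ge> 1 \<Longrightarrow> \<alpha> * real (OPT k (J N)) + \<beta> * real (eta False (J N) (q N))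
        + \<gamma> * real (eta True (J N) (q N)) \<le> \<theta> * real N + K"
  shows "\<not> competitive k A eta \<alpha> \<beta> \<gamma>"
proof
  assume "competitive k A eta \<alpha> \<beta> \<gamma>"
  then obtain b where b: "\<And>I p. real (ALG k A I p)
      \<le> \<alpha> * real (OPT k I) + \<beta> * real (eta False I p) + \<gamma> * real (eta True I p) + b"
    unfolding competitive_def by blast
  have "real N \<le> \<theta> * real N + (K + b)" if "N \<ge> 1" for N :: nat
    using alg[OF that] bound[OF that] b[of "J N" "q N"] by linarith
  then have "\<theta> \<ge> 1"
    by (rule slope_ge_1_if_linear_bound)
  with assms(1) show False
    by simp
qed

lemma not_competitive_if_alpha_lt_1:
  assumes "\<alpha> < 1" and perfect: "\<And>h I. eta h I (q I) = 0"
  shows "\<not> competitive k A eta \<alpha> \<beta> \<gamma>"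
  using assms(1)
  by (rule not_competitive_if_hard_instances[where J = "\<lambda>N. [0..<N]" and q = "\<lambda>N. q [0..<N]" and K = 0])
    (simp_all add: ALG_distinct OPT_distinct perfect)

lemma cruel_seq_lfd_run:
  assumes "k \<ge> 1" "valid_tiebreak tb"
  shows "lfd_run k tb (cruel_seq k A c N)"
  using assms cruel_seq_nth_missing[OF assms(1)] by unfold_locales auto

lemma valid_tiebreak_Min: "valid_tiebreak (\<lambda>i S. Min S)"
  by (simp add: valid_tiebreak_def)

lemma eta_disc_ground_truth: "eta_disc k tb h I (pstar_disc k tb I) = 0"
  by (cases h) (simp_all add: eta_disc_def)

lemma eta_phase_ground_truth: "eta_phase k h I (pstar_phase k I) = 0"
  by (cases h) (simp_all add: eta_phase_def)

lemma disc_not_competitive_beta: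
  assumes k: "k \<ge> 1" and tb: "valid_tiebreak tb" and "\<alpha> \<ge> 0" "\<beta> \<ge> 0" "\<alpha> + \<beta> < real k"
  shows "\<not> competitive k A (eta_disc k tb) \<alpha> \<beta> \<gamma>"
proof (rule not_competitive_if_hard_instances[where J = "cruel_seq k A False" and q = "\<lambda>_ _. False"
      and \<theta> = "(\<alpha> + \<beta>) / real k" and K = "\<alpha> * (real k + 1) + \<beta>"])
  show "(\<alpha> + \<beta>) / real k < 1"
    using assms by simp
  fix N :: nat
  let ?I = "cruel_seq k A False N"
  show "real N \<le> real (ALG k A ?I (\<lambda>_. False))"
    using ALG_cruel_seq[OF k] by simp
  interpret lfd_run k tb ?I
    by (rule cruel_seq_lfd_run[OF k tb])
  have "eta_disc k tb True ?I (\<lambda>_. False) = 0"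
    by (simp add: eta_disc_def)
  then have "\<alpha> * real (OPT k ?I)
      + \<beta> * real (eta_disc k tb False ?I (\<lambda>_. False))
      + \<gamma> * real (eta_disc k tb True ?I (\<lambda>_. False))
      \<le> \<alpha> * (real N / real k + real k + 1) + \<beta> * (real N / real k + 1)"
    using mult_left_mono[OF OPT_le_real \<open>\<alpha> \<ge> 0\<close>] mult_left_mono[OF card_discarded_real \<open>\<beta> \<ge> 0\<close>]
    by (simp add: eta_disc_all_0)
  also have "\<dots> = (\<alpha> + \<beta>) / real k * real N + (\<alpha> * (real k + 1) + \<beta>)"
    using k by (simp add: field_simps)
  finally show "\<alpha> * real (OPT k ?I)
      + \<beta> * real (eta_disc k tb False ?I (\<lambda>_. False))
      + \<gamma> * real (eta_disc k tb True ?I (\<lambda>_. False))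
      \<le> (\<alpha> + \<beta>) / real k * real N + (\<alpha> * (real k + 1) + \<beta>)" .
qed

lemma disc_not_competitive_gamma:
  assumes k: "k \<ge> 1" and tb: "valid_tiebreak tb" and "\<gamma> \<le> \<alpha>" "\<gamma> \<ge> 0"
    and "\<alpha> + (real k - 1) * \<gamma> < real k"
  shows "\<not> competitive k A (eta_disc k tb) \<alpha> \<beta> \<gamma>"
proof (rule not_competitive_if_hard_instances[where J = "cruel_seq k A True" and q = "\<lambda>_ _. True"
      and \<theta> = "(\<alpha> + (real k - 1) * \<gamma>) / real k" and K = "(\<alpha> - \<gamma>) * (real k + 1) + \<gamma> * real k"])
  show "(\<alpha> + (real k - 1) * \<gamma>) / real k < 1"
    using assms by simp
  fix N :: nat
  let ?I = "cruel_seq k A True N"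
  show "real N \<le> real (ALG k A ?I (\<lambda>_. True))"
    using ALG_cruel_seq[OF k] by simp
  interpret lfd_run k tb ?I
    by (rule cruel_seq_lfd_run[OF k tb])
  have "eta_disc k tb False ?I (\<lambda>_. True) = 0"
    by (simp add: eta_disc_def)
  moreover have "real (eta_disc k tb True ?I (\<lambda>_. True)) \<le> real N - real (OPT k ?I) + real k"
    using eta_disc_all_1 OPT_le_discarded by simp
  ultimately have "\<alpha> * real (OPT k ?I) + \<beta> * real (eta_disc k tb False ?I (\<lambda>_. True))
      + \<gamma> * real (eta_disc k tb True ?I (\<lambda>_. True))
      \<le> \<alpha> * real (OPT k ?I) + \<gamma> * (real N - real (OPT k ?I) + real k)"
    using \<open>\<gamma> \<ge> 0\<close> by (simp add: mult_left_mono)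
  also have "\<dots> = \<gamma> * real N + (\<alpha> - \<gamma>) * real (OPT k ?I) + \<gamma> * real k"
    by (simp add: algebra_simps)
  also have "\<dots> \<le> \<gamma> * real N + (\<alpha> - \<gamma>) * (real N / real k + real k + 1) + \<gamma> * real k"
    using OPT_le_real \<open>\<gamma> \<le> \<alpha>\<close> by (simp add: mult_left_mono)
  also have "\<dots> = (\<alpha> + (real k - 1) * \<gamma>) / real k * real N + ((\<alpha> - \<gamma>) * (real k + 1) + \<gamma> * real k)"
    using k by (simp add: field_simps)
  finally show "\<alpha> * real (OPT k ?I) + \<beta> * real (eta_disc k tb False ?I (\<lambda>_. True))
      + \<gamma> * real (eta_disc k tb True ?I (\<lambda>_. True))
      \<le> (\<alpha> + (real k - 1) * \<gamma>) / real k * real N + ((\<alpha> - \<gamma>) * (real k + 1) + \<gamma> * real k)" .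
qed

lemma phase_not_competitive_beta:
  assumes k: "k \<ge> 1" and "\<alpha> \<ge> 0" "\<beta> \<ge> 0" "\<alpha> + \<beta> < real k"
  shows "\<not> competitive k A (eta_phase k) \<alpha> \<beta> \<gamma>"
proof (rule not_competitive_if_hard_instances[where J = "cruel_seq k A False" and q = "\<lambda>_ _. False"
      and \<theta> = "(\<alpha> + \<beta>) / real k" and K = "(\<alpha> + \<beta>) * (real k + 1)"])
  show "(\<alpha> + \<beta>) / real k < 1"
    using assms by simp
  fix N :: nat
  assume "N \<ge> 1"
  let ?I = "cruel_seq k A False N"
  show "real N \<le> real (ALG k A ?I (\<lambda>_. False))"
    using ALG_cruel_seq[OF k] by simp
  interpret L: lfd_run k "\<lambda>i S. Min S" ?I
    by (rule cruel_seq_lfd_run[OF k valid_tiebreak_Min])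
  interpret P: phase_run k ?I
    using k by unfold_locales
  have "eta_phase k True ?I (\<lambda>_. False) = 0"
    by (simp add: eta_phase_def)
  moreover have "eta_phase k False ?I (\<lambda>_. False) = card P.counted_true"
    by (simp add: eta_phase_def P.counted_true_def)
  moreover have "real (card P.counted_true) \<le> real N / real k + real k + 1"
    using P.card_counted_true_real \<open>N \<ge> 1\<close> L.pages_le_k by simp
  note mult_left_mono[OF this \<open>\<beta> \<ge> 0\<close>]
  ultimately have "\<alpha> * real (OPT k ?I) + \<beta> * real (eta_phase k False ?I (\<lambda>_. False))
      + \<gamma> * real (eta_phase k True ?I (\<lambda>_. False))
      \<le> \<alpha> * (real N / real k + real k + 1) + \<beta> * (real N / real k + real k + 1)"
    using mult_left_mono[OF L.OPT_le_real \<open>\<alpha> \<ge> 0\<close>] by simp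
  also have "\<dots> = (\<alpha> + \<beta>) / real k * real N + (\<alpha> + \<beta>) * (real k + 1)"
    using k by (simp add: field_simps)
  finally show "\<alpha> * real (OPT k ?I) + \<beta> * real (eta_phase k False ?I (\<lambda>_. False))
      + \<gamma> * real (eta_phase k True ?I (\<lambda>_. False))
      \<le> (\<alpha> + \<beta>) / real k * real N + (\<alpha> + \<beta>) * (real k + 1)" .
qed

lemma phase_not_competitive_gamma:
  assumes k: "k \<ge> 1" and "\<alpha> \<ge> 0" "\<gamma> \<ge> 0" "\<alpha> + (real k - 1) * \<gamma> < real k"
  shows "\<not> competitive k A (eta_phase k) \<alpha> \<beta> \<gamma>"
proof (rule not_competitive_if_hard_instances[where J = "cruel_seq k A True" and q = "\<lambda>_ _. True"
      and \<theta> = "(\<alpha> + (real k - 1) * \<gamma>) / real k" and K = "\<alpha> * (real k + 1)"])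
  show "(\<alpha> + (real k - 1) * \<gamma>) / real k < 1"
    using assms by simp
  fix N :: nat
  assume "N \<ge> 1"
  let ?I = "cruel_seq k A True N"
  show "real N \<le> real (ALG k A ?I (\<lambda>_. True))"
    using ALG_cruel_seq[OF k] by simp
  interpret L: lfd_run k "\<lambda>i S. Min S" ?I
    by (rule cruel_seq_lfd_run[OF k valid_tiebreak_Min])
  interpret P: phase_run k ?I
    using k by unfold_locales
  have "eta_phase k False ?I (\<lambda>_. True) = 0"
    by (simp add: eta_phase_def)
  moreover have "eta_phase k True ?I (\<lambda>_. True) = card P.counted_false"
    by (simp add: eta_phase_def P.counted_false_def)
  moreover have "length ?I \<ge> 1"
    using \<open>N \<ge> 1\<close> by simp
  note mult_left_mono[OF P.card_counted_false_real[OF this] \<open>\<gamma> \<ge> 0\<close>]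
  ultimately have "\<alpha> * real (OPT k ?I) + \<beta> * real (eta_phase k False ?I (\<lambda>_. True))
      + \<gamma> * real (eta_phase k True ?I (\<lambda>_. True))
      \<le> \<alpha> * (real N / real k + real k + 1) + \<gamma> * ((real k - 1) * (real N / real k))"
    using mult_left_mono[OF L.OPT_le_real \<open>\<alpha> \<ge> 0\<close>] by simp
  also have "\<dots> = (\<alpha> + (real k - 1) * \<gamma>) / real k * real N + \<alpha> * (real k + 1)"
    using k by (simp add: field_simps)
  finally show "\<alpha> * real (OPT k ?I) + \<beta> * real (eta_phase k False ?I (\<lambda>_. True))
      + \<gamma> * real (eta_phase k True ?I (\<lambda>_. True))
      \<le> (\<alpha> + (real k - 1) * \<gamma>) / real k * real N + \<alpha> * (real k + 1)" .
qed

theorem theorem5: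
  fixes k :: nat and A :: chooser and \<alpha> \<beta> \<gamma> :: real
  assumes "k \<ge> 1"
    and "\<alpha> \<ge> 0" and "\<beta> \<ge> 0" and "\<gamma> \<ge> 0"
    and "\<alpha> + \<beta> < real k \<or> \<alpha> + (real k - 1) * \<gamma> < real k"
  shows "(\<forall>tb. valid_tiebreak tb \<longrightarrow> \<not> competitive k A (eta_disc k tb) \<alpha> \<beta> \<gamma>)
         \<and> \<not> competitive k A (eta_phase k) \<alpha> \<beta> \<gamma>"
proof (cases "\<alpha> < 1")
  case True
  have "\<not> competitive k A (eta_disc k tb) \<alpha> \<beta> \<gamma>" for tb
    using True eta_disc_ground_truth by (rule not_competitive_if_alpha_lt_1)
  moreover have "\<not> competitive k A (eta_phase k) \<alpha> \<beta> \<gamma>"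
    using True eta_phase_ground_truth by (rule not_competitive_if_alpha_lt_1)
  ultimately show ?thesis
    by blast
next
  case False
  from assms(5) show ?thesis
  proof
    assume "\<alpha> + \<beta> < real k"
    then show ?thesis
      using disc_not_competitive_beta phase_not_competitive_beta assms(1-3) by blast
  next
    assume gamma: "\<alpha> + (real k - 1) * \<gamma> < real k"
    have "(real k - 1) * 1 \<le> (real k - 1) * \<gamma>" if "\<gamma> > 1"
      using assms(1) that by (intro mult_left_mono) auto
    then have "\<gamma> \<le> \<alpha>"
      using False gamma by force
    then show ?thesis
      using disc_not_competitive_gamma phase_not_competitive_gamma assms(1,2,4) gamma by blast
  qed
qed

end
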